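(* Fix $0\le k<1$. For every $\eta>0$ there exists $\varepsilon_0>0$ such that the following holds: if $0\le\varepsilon<\varepsilon_0$ and $h:\mathbb{D}\to\mathbb{D}$ is holomorphic with $h(0)=\varepsilon$ and \[ h(r\mathbb{D})\subset \overline{B}\Big(\tfrac{1-r^2}{2},\tfrac{1+r^2}{2}\Big)\quad\text{for all } r\in(0,1), \] then $|h(k)|\le k^2+\eta$. In other words, $|h(k)|\le k^2+o(1)$ as $\varepsilon\to0$, uniformly over all such $h$.
   Context: $\mathbb{D}$ is the open unit disk, $r\mathbb{D}=\{|z|<r\}$, and $\overline{B}(c,\rho)$ is the closed disk with center $c$ and radius $\rho$ (so $\overline{B}((1-r^2)/2,(1+r^2)/2)$ is the closed disk with diameter $[-r^2,1]$). *)

theory Defs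
  imports "HOL-Analysis.Analysis"
begin

end

theory Submission
  imports Defs "HOL-Complex_Analysis.Complex_Analysis"
begin

text \<open>
  Compose h with the disc automorphism moving \<epsilon> to 0: then g = \<phi> \<circ> h has g(0) = 0, differs from
  h by at most 4\<epsilon>, and by Schwarz factors as g(z) = z q(z) with |q| \<le> 1. The hypothesis gives
  Re h \<ge> -r^2 on the disc of radius r, so Re (z q(z)) \<ge> -8\<delta>^2 on the circle |z| = \<delta> once
  \<epsilon> \<le> \<delta>^2. Since q is 3-Lipschitz at 0, testing at the point z of that circle with
  z q(0) = -\<delta> |q(0)| yields |q(0)| \<le> 11\<delta>. Schwarz-Pick then bounds |q(k)| \<le> k + 44\<delta>, whence
  |h(k)| \<le> k |q(k)| + 4\<epsilon> \<le> k^2 + 45\<delta>.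
\<close>

lemma norm_Moebius_function_le:
  fixes a w :: complex
  assumes "norm a < 1" "norm w \<le> 1"
  shows "norm (Moebius_function 0 (-a) w) \<le> (norm w + norm a) / (1 - norm a)"
proof -
  have "norm (cnj a * w) \<le> norm a"
    using assms by (simp add: norm_mult mult_left_le)
  then have den: "1 - norm a \<le> norm (1 + cnj a * w)"
    by (metis add_le_cancel_left diff_le_eq norm_diff_ineq norm_one order_trans)
  have "norm (Moebius_function 0 (-a) w) = norm (w + a) / norm (1 + cnj a * w)"
    by (simp add: Moebius_function_def norm_divide)
  also have "\<dots> \<le> (norm w + norm a) / (1 - norm a)"
    using den assms(1) by (intro frac_le norm_triangle_ineq) auto
  finally show ?thesis .
qed

lemma norm_Moebius_function_diff_le:
  fixes a w :: complex
  assumes "norm a \<le> 1/2" "norm w \<le> 1"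
  shows "norm (Moebius_function 0 (-a) w - w) \<le> 4 * norm a"
proof -
  have "norm (cnj a * w) \<le> norm a"
    using assms by (simp add: norm_mult mult_left_le)
  then have den: "1/2 \<le> norm (1 + cnj a * w)"
    using assms(1) norm_diff_ineq[of 1 "cnj a * w"] by simp
  then have "1 + cnj a * w \<noteq> 0" by auto
  then have eq: "Moebius_function 0 (-a) w - w = (a - cnj a * w * w) / (1 + cnj a * w)"
    by (simp add: Moebius_function_simple divide_simps) (simp add: algebra_simps)
  have "norm (a - cnj a * w * w) \<le> norm a + norm (cnj a * w * w)"
    by (rule norm_triangle_ineq4)
  also have "\<dots> \<le> 2 * norm a"
    using assms(2) mult_le_one[of "norm w" "norm w"] mult_left_le[of "norm w * norm w" "norm a"]
    by (simp add: norm_mult mult.assoc)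
  finally have "norm (Moebius_function 0 (-a) w - w) \<le> (2 * norm a) / (1/2)"
    unfolding eq norm_divide using den by (intro frac_le) auto
  then show ?thesis by simp
qed

lemma Schwarz_factor:
  fixes g :: "complex \<Rightarrow> complex"
  assumes holg: "g holomorphic_on ball 0 1" and g0: "g 0 = 0"
    and gb: "\<And>z. norm z < 1 \<Longrightarrow> norm (g z) < 1"
  obtains q where "q holomorphic_on ball 0 1" "\<And>z. norm z < 1 \<Longrightarrow> g z = z * q z"
    "\<And>z. norm z < 1 \<Longrightarrow> norm (q z) \<le> 1"
proof -
  obtain q where holq: "q holomorphic_on ball 0 1" and gq: "\<And>z. norm z < 1 \<Longrightarrow> g z = z * q z"
    and dq: "deriv g 0 = q 0"
    using Schwarz3[OF holg g0] by blast
  have "norm (q z) \<le> 1" if z: "norm z < 1" for z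
  proof (cases "z = 0")
    case True
    then show ?thesis using Schwarz_Lemma(2)[OF holg g0 gb z] dq by simp
  next
    case False
    have "norm z * norm (q z) \<le> norm z * 1"
      using Schwarz_Lemma(1)[OF holg g0 gb z] gq[OF z] by (simp add: norm_mult)
    then show ?thesis using False by simp
  qed
  with holq gq that show thesis by blast
qed

lemma norm_diff_at_0_le:
  fixes f :: "complex \<Rightarrow> complex"
  assumes holf: "f holomorphic_on ball 0 1" and le1: "\<And>z. norm z < 1 \<Longrightarrow> norm (f z) \<le> 1"
    and z: "norm z < 1"
  shows "norm (f z - f 0) \<le> 3 * norm z"
proof -
  \<comment> \<open>Dividing by 3 rather than 2 gives the strict bound the Schwarz lemma needs.\<close>
  define F where "F w = (f w - f 0) / 3" for w
  have "F holomorphic_on ball 0 1"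
    unfolding F_def using holf by (intro holomorphic_intros) auto
  moreover have "F 0 = 0" by (simp add: F_def)
  moreover have "norm (F w) < 1" if w: "norm w < 1" for w
  proof -
    have "norm (f w - f 0) \<le> norm (f w) + norm (f 0)" by (rule norm_triangle_ineq4)
    also have "\<dots> \<le> 2" using le1[OF w] le1[of 0] by simp
    finally show ?thesis by (simp add: F_def norm_divide)
  qed
  ultimately have "norm (F z) \<le> norm z" using Schwarz_Lemma(1) z by blast
  then show ?thesis by (simp add: F_def norm_divide)
qed

lemma norm_lt_1_of_norm_le_1:
  fixes f :: "complex \<Rightarrow> complex"
  assumes holf: "f holomorphic_on ball 0 1" and le1: "\<And>z. norm z < 1 \<Longrightarrow> norm (f z) \<le> 1"
    and f0: "norm (f 0) < 1" and z: "norm z < 1"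
  shows "norm (f z) < 1"
proof (rule ccontr)
  assume "\<not> norm (f z) < 1"
  then have "norm (f z) = 1" using le1[OF z] by simp
  then have "f constant_on ball 0 1"
    using z le1 by (intro maximum_modulus_principle[OF holf, of "ball 0 1" z]) auto
  then have "f 0 = f z" using z by (auto simp: constant_on_def)
  with f0 \<open>norm (f z) = 1\<close> show False by simp
qed

lemma Schwarz_Pick_norm_le:
  fixes f :: "complex \<Rightarrow> complex"
  assumes holf: "f holomorphic_on ball 0 1" and fb: "f ` ball 0 1 \<subseteq> ball 0 1" and z: "norm z < 1"
  shows "norm (f z) \<le> (norm z + norm (f 0)) / (1 - norm (f 0))"
proof -
  have fb': "norm (f w) < 1" if "norm w < 1" for w using fb that by (metis image_subset_iff mem_ball_0)
  define a where "a = f 0"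
  have a: "norm a < 1" using fb'[of 0] by (simp add: a_def)
  define Q where "Q = (\<lambda>w. Moebius_function 0 a (f w))"
  have "Q holomorphic_on ball 0 1"
    using holomorphic_on_compose_gen[OF holf Moebius_function_holomorphic[OF a] fb]
    by (simp add: Q_def o_def)
  moreover have "Q 0 = 0" by (simp add: Q_def a_def Moebius_function_eq_zero)
  moreover have Qb: "norm (Q w) < 1" if "norm w < 1" for w
    unfolding Q_def using Moebius_function_norm_lt_1[OF a fb'[OF that]] .
  ultimately have Qz: "norm (Q z) \<le> norm z" using Schwarz_Lemma(1) z by blast
  have "f z = Moebius_function 0 (-a) (Q z)"
    unfolding Q_def using Moebius_function_compose[of "-a" a "f z"] a fb'[OF z] by simp
  then have "norm (f z) \<le> (norm (Q z) + norm a) / (1 - norm a)"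
    using norm_Moebius_function_le[OF a less_imp_le[OF Qb[OF z]]] by simp
  also have "\<dots> \<le> (norm z + norm a) / (1 - norm a)"
    using Qz a by (intro divide_right_mono) auto
  finally show ?thesis by (simp add: a_def)
qed

lemma norm_at_0_le_of_Re_ge:
  fixes q :: "complex \<Rightarrow> complex" and \<rho> L c :: real
  assumes "0 < \<rho>"
    and lip: "\<And>z. norm z = \<rho> \<Longrightarrow> norm (q z - q 0) \<le> L * norm z"
    and re: "\<And>z. norm z = \<rho> \<Longrightarrow> - c \<le> Re (z * q z)"
  shows "\<rho> * norm (q 0) \<le> c + L * \<rho>\<^sup>2"
proof -
  obtain u where u: "norm u = 1" "u * q 0 = - complex_of_real (norm (q 0))"
  proof (cases "q 0 = 0")
    case True
    then show ?thesis using that[of 1] by simp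
  next
    case False
    have "cnj (q 0) * q 0 = complex_of_real ((norm (q 0))\<^sup>2)"
      by (metis complex_norm_square mult.commute)
    then have "- cnj (q 0) / norm (q 0) * q 0 = - complex_of_real (norm (q 0))"
      using False by (simp add: power2_eq_square field_simps)
    moreover have "norm (- cnj (q 0) / norm (q 0)) = 1"
      using False by (simp add: norm_divide)
    ultimately show ?thesis using that by blast
  qed
  define z where "z = complex_of_real \<rho> * u"
  have nz: "norm z = \<rho>" using u assms(1) by (simp add: z_def norm_mult)
  have "z * q z = complex_of_real \<rho> * (u * q 0) + z * (q z - q 0)"
    by (simp add: z_def algebra_simps)
  also have "\<dots> = - complex_of_real (\<rho> * norm (q 0)) + z * (q z - q 0)"
    using u(2) by simp
  finally have "Re (z * q z) \<le> - \<rho> * norm (q 0) + norm (z * (q z - q 0))"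
    using complex_Re_le_cmod[of "z * (q z - q 0)"] by simp
  moreover have "norm (z * (q z - q 0)) \<le> L * \<rho>\<^sup>2"
    using mult_left_mono[OF lip[OF nz], of \<rho>] nz assms(1)
    by (simp add: norm_mult power2_eq_square mult.commute mult.left_commute)
  ultimately show ?thesis using re[OF nz] by linarith
qed

lemma add_div_one_minus_le:
  fixes a x :: real
  assumes "0 \<le> a" "a \<le> 1" "0 \<le> x" "x \<le> 1/2"
  shows "(a + x) / (1 - x) \<le> a + 4 * x"
proof -
  have "0 \<le> x * (3 - a - 4 * x)" using assms by (intro mult_nonneg_nonneg) auto
  then have "a + x \<le> (a + 4 * x) * (1 - x)" by (simp add: algebra_simps)
  then show ?thesis using assms by (simp add: divide_le_eq)
qed

lemma Schwarz_bound_of_Re_ge_on_circle: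
  fixes g :: "complex \<Rightarrow> complex" and \<delta> :: real
  assumes holg: "g holomorphic_on ball 0 1" and g0: "g 0 = 0"
    and gb: "\<And>z. norm z < 1 \<Longrightarrow> norm (g z) < 1"
    and \<delta>: "0 < \<delta>" "\<delta> \<le> 1/25"
    and re: "\<And>z. norm z = \<delta> \<Longrightarrow> - 8 * \<delta>\<^sup>2 \<le> Re (g z)"
    and z: "norm z < 1"
  shows "norm (g z) \<le> (norm z)\<^sup>2 + 44 * \<delta>"
proof -
  obtain q where holq: "q holomorphic_on ball 0 1" and gq: "\<And>z. norm z < 1 \<Longrightarrow> g z = z * q z"
    and qle1: "\<And>z. norm z < 1 \<Longrightarrow> norm (q z) \<le> 1"
    using Schwarz_factor[OF holg g0 gb] by blast
  have "\<delta> * norm (q 0) \<le> 8 * \<delta>\<^sup>2 + 3 * \<delta>\<^sup>2"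
  proof (rule norm_at_0_le_of_Re_ge[OF \<delta>(1)])
    fix w :: complex
    assume w: "norm w = \<delta>"
    then have w1: "norm w < 1" using \<delta> by simp
    show "norm (q w - q 0) \<le> 3 * norm w"
      using norm_diff_at_0_le[OF holq qle1 w1] .
    show "- (8 * \<delta>\<^sup>2) \<le> Re (w * q w)"
      using re[OF w] gq[OF w1] by simp
  qed
  then have q0: "norm (q 0) \<le> 11 * \<delta>"
    using \<delta> by (simp add: power2_eq_square)
  have "q ` ball 0 1 \<subseteq> ball 0 1"
    using norm_lt_1_of_norm_le_1[OF holq qle1] q0 \<delta> by auto
  then have "norm (q z) \<le> (norm z + norm (q 0)) / (1 - norm (q 0))"
    by (rule Schwarz_Pick_norm_le[OF holq _ z])
  also have "\<dots> \<le> norm z + 4 * norm (q 0)"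
    using z q0 \<delta> by (intro add_div_one_minus_le) auto
  finally have "norm (q z) \<le> norm z + 44 * \<delta>"
    using q0 by simp
  then have "norm (g z) \<le> norm z * (norm z + 44 * \<delta>)"
    using gq[OF z] by (simp add: norm_mult mult_left_mono)
  also have "\<dots> \<le> (norm z)\<^sup>2 + 44 * \<delta>"
    using mult_left_le_one_le[of "44 * \<delta>" "norm z"] z \<delta>
    by (simp add: power2_eq_square algebra_simps)
  finally show ?thesis .
qed

lemma recentre_self_map:
  fixes h :: "complex \<Rightarrow> complex"
  assumes holh: "h holomorphic_on ball 0 1" and hb: "h ` ball 0 1 \<subseteq> ball 0 1"
    and h0: "norm (h 0) \<le> 1/2"
  obtains g where "g holomorphic_on ball 0 1" "g 0 = 0" "\<And>z. norm z < 1 \<Longrightarrow> norm (g z) < 1"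
    "\<And>z. norm z < 1 \<Longrightarrow> norm (h z - g z) \<le> 4 * norm (h 0)"
proof -
  have hb': "norm (h w) < 1" if "norm w < 1" for w
    using hb that by (metis image_subset_iff mem_ball_0)
  have a: "norm (h 0) < 1" using h0 by simp
  define g where "g = (\<lambda>w. Moebius_function 0 (h 0) (h w))"
  have "g holomorphic_on ball 0 1"
    using holomorphic_on_compose_gen[OF holh Moebius_function_holomorphic[OF a] hb]
    by (simp add: g_def o_def)
  moreover have "g 0 = 0" by (simp add: g_def Moebius_function_eq_zero)
  moreover have gb: "norm (g w) < 1" if "norm w < 1" for w
    unfolding g_def using Moebius_function_norm_lt_1[OF a hb'[OF that]] .
  moreover have "norm (h w - g w) \<le> 4 * norm (h 0)" if w: "norm w < 1" for w
  proof -
    have "h w = Moebius_function 0 (- h 0) (g w)"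
      unfolding g_def using Moebius_function_compose a hb'[OF w] by simp
    then show ?thesis
      using norm_Moebius_function_diff_le[OF h0 less_imp_le[OF gb[OF w]]] by simp
  qed
  ultimately show thesis using that by blast
qed

lemma norm_le_of_Re_ge_neg_square:
  fixes h :: "complex \<Rightarrow> complex" and \<epsilon> \<delta> :: real
  assumes holh: "h holomorphic_on ball 0 1" and hb: "h ` ball 0 1 \<subseteq> ball 0 1"
    and h0: "h 0 = complex_of_real \<epsilon>"
    and re: "\<And>r z. 0 < r \<Longrightarrow> r < 1 \<Longrightarrow> norm z < r \<Longrightarrow> - r\<^sup>2 \<le> Re (h z)"
    and \<delta>: "0 < \<delta>" "\<delta> \<le> 1/25" and \<epsilon>: "0 \<le> \<epsilon>" "\<epsilon> \<le> \<delta>\<^sup>2"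
    and z: "norm z < 1"
  shows "norm (h z) \<le> (norm z)\<^sup>2 + 45 * \<delta>"
proof -
  have \<delta>\<delta>: "4 * \<delta>\<^sup>2 \<le> \<delta>"
    using \<delta> mult_right_mono[of \<delta> "1/25" \<delta>] by (simp add: power2_eq_square)
  then have "norm (h 0) \<le> 1/2" using h0 \<epsilon> \<delta> by simp
  then obtain g where holg: "g holomorphic_on ball 0 1" and g0: "g 0 = 0"
    and gb: "\<And>z. norm z < 1 \<Longrightarrow> norm (g z) < 1"
    and hg: "\<And>z. norm z < 1 \<Longrightarrow> norm (h z - g z) \<le> 4 * \<epsilon>"
    using recentre_self_map[OF holh hb] h0 \<epsilon> by auto
  have "norm (g z) \<le> (norm z)\<^sup>2 + 44 * \<delta>"
  proof (rule Schwarz_bound_of_Re_ge_on_circle[OF holg g0 gb \<delta> _ z])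
    fix w :: complex
    assume w: "norm w = \<delta>"
    have "- (2 * \<delta>)\<^sup>2 \<le> Re (h w)"
      using re[of "2 * \<delta>" w] w \<delta> by simp
    moreover have "Re (h w - g w) \<le> 4 * \<epsilon>"
      using hg[of w] complex_Re_le_cmod[of "h w - g w"] w \<delta> by simp
    ultimately show "- 8 * \<delta>\<^sup>2 \<le> Re (g w)"
      using \<epsilon> by (simp add: power2_eq_square)
  qed
  moreover have "norm (h z) \<le> norm (g z) + norm (h z - g z)"
    by (rule norm_triangle_sub)
  ultimately show ?thesis
    using hg[OF z] \<epsilon> \<delta>\<delta> by linarith
qed

lemma Re_ge_of_image_ball_subset_cball:
  fixes h :: "complex \<Rightarrow> complex"
  assumes "\<forall>r. 0 < r \<and> r < 1 \<longrightarrow>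
      h ` ball 0 r \<subseteq> cball (complex_of_real ((1 - r\<^sup>2) / 2)) ((1 + r\<^sup>2) / 2)"
    and "0 < r" "r < 1" "norm z < r"
  shows "- r\<^sup>2 \<le> Re (h z)"
proof -
  have "h ` ball 0 r \<subseteq> cball (complex_of_real ((1 - r\<^sup>2) / 2)) ((1 + r\<^sup>2) / 2)"
    using assms(1-3) by simp
  moreover have "z \<in> ball 0 r" using assms(4) by simp
  ultimately have "dist (complex_of_real ((1 - r\<^sup>2) / 2)) (h z) \<le> (1 + r\<^sup>2) / 2"
    by (metis image_subset_iff mem_cball)
  then show ?thesis
    using abs_Re_le_cmod[of "complex_of_real ((1 - r\<^sup>2) / 2) - h z"]
    by (simp add: dist_norm field_simps)
qed

theorem lemma3p1:
  fixes k :: real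
  assumes "0 \<le> k" and "k < 1"
  shows "\<forall>\<eta>>0. \<exists>\<epsilon>0>0. \<forall>(\<epsilon>::real) (h::complex \<Rightarrow> complex).
           0 \<le> \<epsilon> \<and> \<epsilon> < \<epsilon>0 \<and>
           h holomorphic_on ball 0 1 \<and> h ` ball 0 1 \<subseteq> ball 0 1 \<and>
           h 0 = complex_of_real \<epsilon> \<and>
           (\<forall>r. 0 < r \<and> r < 1 \<longrightarrow>
              h ` ball 0 r \<subseteq> cball (complex_of_real ((1 - r\<^sup>2) / 2)) ((1 + r\<^sup>2) / 2))
           \<longrightarrow> cmod (h (complex_of_real k)) \<le> k\<^sup>2 + \<eta>"
proof -
  define \<delta> where "\<delta> \<eta> = min (1/25) (\<eta> / 45)" for \<eta> :: real
  have \<delta>: "0 < \<delta> \<eta>" "\<delta> \<eta> \<le> 1/25" "45 * \<delta> \<eta> \<le> \<eta>" if "0 < \<eta>" for \<eta>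
    using that by (auto simp: \<delta>_def)
  have bound: "cmod (h (complex_of_real k)) \<le> k\<^sup>2 + \<eta>"
    if \<eta>: "0 < \<eta>" and \<epsilon>: "0 \<le> \<epsilon>" "\<epsilon> < (\<delta> \<eta>)\<^sup>2"
      and h: "h holomorphic_on ball 0 1" "h ` ball 0 1 \<subseteq> ball 0 1" "h 0 = complex_of_real \<epsilon>"
      and cons: "\<forall>r. 0 < r \<and> r < 1 \<longrightarrow>
         h ` ball 0 r \<subseteq> cball (complex_of_real ((1 - r\<^sup>2) / 2)) ((1 + r\<^sup>2) / 2)"
    for \<eta> \<epsilon> and h :: "complex \<Rightarrow> complex"
  proof -
    have "cmod (h (complex_of_real k)) \<le> (cmod (complex_of_real k))\<^sup>2 + 45 * \<delta> \<eta>"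
      using assms \<delta>(1,2)[OF \<eta>] \<epsilon> Re_ge_of_image_ball_subset_cball[OF cons]
      by (intro norm_le_of_Re_ge_neg_square[OF h]) auto
    then have "cmod (h (complex_of_real k)) \<le> k\<^sup>2 + 45 * \<delta> \<eta>"
      using assms(1) by simp
    with \<delta>(3)[OF \<eta>] show ?thesis by linarith
  qed
  show ?thesis
    apply (intro allI impI)
    subgoal for \<eta>
      using bound[of \<eta>] \<delta>(1)[of \<eta>] by (intro exI[of _ "(\<delta> \<eta>)\<^sup>2"]) auto
    done
qed

end
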